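(* Let $P=(\succ_1,\dots,\succ_n)$ and $P'=(\succ'_1,\dots,\succ'_n)$ be two preference profiles over the same set of agents $N$ and the same set of houses $H$. Then $G_P=G_{P'}$ (the two profiles induce the same majority graph) if and only if $P$ and $P'$ are rotation equivalent.
   Context: Let $n\ge 1$, let $N=\{1,\dots,n\}$ be a set of agents and $H$ a set of $n$ houses. A preference profile $P=(\succ_1,\dots,\succ_n)$ assigns to each agent $x\in N$ a strict linear order $\succ_x$ on $H$. An assignment is a bijection $\mu:N\to H$; $M$ denotes the set of all assignments. Agent $x$ weakly prefers $\mu$ to $\lambda$ if $\mu(x)\succ_x\lambda(x)$ or $\mu(x)=\lambda(x)$. Let $N_{\mu,\lambda}=\{x\in N: x \text{ weakly prefers } \mu \text{ to } \lambda\}$, and write $\mu\succsim\lambda$ if $|N_{\mu,\lambda}|\ge|N_{\lambda,\mu}|$. The majority graph of $P$ is the directed graph $G_P=(M,\{(\mu,\lambda)\in M^2:\mu\succsim\lambda\})$. An ordered partition $(H_1,\dots,H_k)$ of $H$ into nonempty sets is a decomposition of a profile $P$ if for all $1\le j<\ell\le k$, all $p\in H_j$, $q\in H_\ell$ and all $x\in N$ we have $p\succ_x q$. Two profiles $P,P'$ are rotation equivalent if there is a decomposition $(H_1,\dots,H_k)$ of $P$ such that (a) for every $j\le k$, all $p,q\in H_j$ and all $x\in N$: $p\succ_x q$ iff $p\succ'_x q$; and (b) there is $r\in\{0,\dots,k-1\}$ such that $(H_{1+r},\dots,H_{k+r})$ is a decomposition of $P'$, where indices are taken cyclically ($H_{j+r}:=H_{j+r-k}$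 if $j+r>k$). *)

theory Defs
  imports Main
begin

text \<open>A profile assigns to each agent x a strict linear order P x on H, given as a
  relation: (p, q) \<in> P x means p is strictly preferred to q by agent x.\<close>

definition agents :: "nat \<Rightarrow> nat set" where
  "agents n = {1..n}"

definition is_profile :: "nat \<Rightarrow> 'h set \<Rightarrow> (nat \<Rightarrow> ('h \<times> 'h) set) \<Rightarrow> bool" where
  "is_profile n H P \<longleftrightarrow>
     (\<forall>x\<in>agents n. P x \<subseteq> H \<times> H \<and> strict_linear_order_on H (P x))"

definition assignments :: "nat \<Rightarrow> 'h set \<Rightarrow> (nat \<Rightarrow> 'h) set" where
  "assignments n H =
     {\<mu>. bij_betw \<mu> (agents n) H \<and> (\<forall>x. x \<notin> agents n \<longrightarrow> \<mu> x = undefined)}"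

definition weakly_prefers ::
  "(nat \<Rightarrow> ('h \<times> 'h) set) \<Rightarrow> nat \<Rightarrow> (nat \<Rightarrow> 'h) \<Rightarrow> (nat \<Rightarrow> 'h) \<Rightarrow> bool" where
  "weakly_prefers P x \<mu> \<nu> \<longleftrightarrow> (\<mu> x, \<nu> x) \<in> P x \<or> \<mu> x = \<nu> x"

definition supporters ::
  "nat \<Rightarrow> (nat \<Rightarrow> ('h \<times> 'h) set) \<Rightarrow> (nat \<Rightarrow> 'h) \<Rightarrow> (nat \<Rightarrow> 'h) \<Rightarrow> nat set" where
  "supporters n P \<mu> \<nu> = {x \<in> agents n. weakly_prefers P x \<mu> \<nu>}"

definition majority_pref ::
  "nat \<Rightarrow> (nat \<Rightarrow> ('h \<times> 'h) set) \<Rightarrow> (nat \<Rightarrow> 'h) \<Rightarrow> (nat \<Rightarrow> 'h) \<Rightarrow> bool" where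
  "majority_pref n P \<mu> \<nu> \<longleftrightarrow> card (supporters n P \<mu> \<nu>) \<ge> card (supporters n P \<nu> \<mu>)"

definition majority_graph ::
  "nat \<Rightarrow> 'h set \<Rightarrow> (nat \<Rightarrow> ('h \<times> 'h) set)
     \<Rightarrow> (nat \<Rightarrow> 'h) set \<times> ((nat \<Rightarrow> 'h) \<times> (nat \<Rightarrow> 'h)) set" where
  "majority_graph n H P =
     (assignments n H,
      {(\<mu>, \<nu>). \<mu> \<in> assignments n H \<and> \<nu> \<in> assignments n H \<and> majority_pref n P \<mu> \<nu>})"

definition decomposition ::
  "nat \<Rightarrow> 'h set \<Rightarrow> (nat \<Rightarrow> ('h \<times> 'h) set) \<Rightarrow> 'h set list \<Rightarrow> bool" where
  "decomposition n H P Hs \<longleftrightarrow>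
     (\<forall>j < length Hs. Hs ! j \<noteq> {}) \<and>
     (\<forall>i < length Hs. \<forall>j < length Hs. i \<noteq> j \<longrightarrow> Hs ! i \<inter> Hs ! j = {}) \<and>
     \<Union> (set Hs) = H \<and>
     (\<forall>j l. j < l \<and> l < length Hs \<longrightarrow>
        (\<forall>p \<in> Hs ! j. \<forall>q \<in> Hs ! l. \<forall>x \<in> agents n. (p, q) \<in> P x))"

definition rotation_equivalent ::
  "nat \<Rightarrow> 'h set \<Rightarrow> (nat \<Rightarrow> ('h \<times> 'h) set) \<Rightarrow> (nat \<Rightarrow> ('h \<times> 'h) set) \<Rightarrow> bool" where
  "rotation_equivalent n H P P' \<longleftrightarrow>
     (\<exists>Hs. decomposition n H P Hs \<and>
        (\<forall>j < length Hs. \<forall>p \<in> Hs ! j. \<forall>q \<in> Hs ! j. \<forall>x \<in> agents n.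
            ((p, q) \<in> P x \<longleftrightarrow> (p, q) \<in> P' x)) \<and>
        (\<exists>r < length Hs. decomposition n H P' (rotate r Hs)))"

end

theory Submission
  imports Defs "HOL-Combinatorics.Permutations"
begin

text \<open>
  Call P' a move of the top segment A to the bottom of P if every agent ranks A above H - A in P,
  ranks H - A above A in P', and otherwise orders the houses as in P. Such a move preserves every
  majority comparison of two assignments \<mu> and \<nu>: an agent whose two houses lie on the same side
  of A judges as before, an agent whose house leaves A (\<mu> x \<in> A, \<nu> x \<notin> A) switches from
  \<mu> to \<nu>, one whose house enters A switches from \<nu> to \<mu>, and since \<mu> and \<nu> are both
  bijections onto H, as many houses leave A as enter it. A rotation equivalence is such a move,
  with A the union of the blocks rotated to the end, and conversely such a move is a rotation of
  the decomposition (A, H - A).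

  Conversely, suppose the majority graphs agree and call (p, q) reversed if some agent prefers p
  to q in P but q to p in P'. Comparing an assignment with its composition with a transposition
  of two agents shows that a reversal is unanimous; comparing it with a 3-cycle of agents (three
  distinct houses force n \<ge> 3) shows that reversals never chain and that for a reversed pair
  (p, q) and any third house r, (p, r) or (r, q) is reversed. Hence the houses heading a reversed
  pair form a top segment of every order of P that P' moves to the bottom.
\<close>

lemma profile_in_carrier:
  assumes "is_profile n H R" "x \<in> agents n" "(p, q) \<in> R x"
  shows "p \<in> H" "q \<in> H"
  using assms unfolding is_profile_def by auto

lemma profile_irrefl: "is_profile n H R \<Longrightarrow> x \<in> agents n \<Longrightarrow> (p, p) \<notin> R x"
  unfolding is_profile_def strict_linear_order_on_def irrefl_def by blast

lemma profile_trans: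
  "is_profile n H R \<Longrightarrow> x \<in> agents n \<Longrightarrow> (p, q) \<in> R x \<Longrightarrow> (q, r) \<in> R x \<Longrightarrow> (p, r) \<in> R x"
  unfolding is_profile_def strict_linear_order_on_def by (meson transE)

lemma profile_asym: "is_profile n H R \<Longrightarrow> x \<in> agents n \<Longrightarrow> (p, q) \<in> R x \<Longrightarrow> (q, p) \<notin> R x"
  using profile_irrefl profile_trans by metis

lemma profile_converse_iff:
  assumes "is_profile n H R" "x \<in> agents n" "p \<in> H" "q \<in> H" "p \<noteq> q"
  shows "(q, p) \<in> R x \<longleftrightarrow> (p, q) \<notin> R x"
  using assms profile_asym[OF assms(1,2)]
  unfolding is_profile_def strict_linear_order_on_def total_on_def by metis

lemma finite_agents [simp]: "finite (agents n)"
  and card_agents [simp]: "card (agents n) = n"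
  unfolding agents_def by simp_all

lemma inj_on_extend_to_bij_betw:
  assumes "finite A" "finite B" "card A = card B" "inj_on f S" "S \<subseteq> A" "f ` S \<subseteq> B"
  obtains g where "bij_betw g A B" "\<And>s. s \<in> S \<Longrightarrow> g s = f s"
proof -
  have "finite S" using assms(1,5) finite_subset by blast
  then have "card (A - S) = card (B - f ` S)"
    using assms by (simp add: card_Diff_subset card_image)
  then obtain h where h: "bij_betw h (A - S) (B - f ` S)"
    using assms(1,2) by (metis finite_Diff finite_same_card_bij)
  define g where "g a = (if a \<in> S then f a else h a)" for a
  have "bij_betw g (S \<union> (A - S)) (f ` S \<union> (B - f ` S))"
  proof (rule bij_betw_combine)
    show "bij_betw g S (f ` S)"
      using inj_on_imp_bij_betw[OF assms(4)] by (rule bij_betw_cong[THEN iffD1, rotated]) (simp add: g_def)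
    show "bij_betw g (A - S) (B - f ` S)"
      using h by (rule bij_betw_cong[THEN iffD1, rotated]) (simp add: g_def)
  qed blast
  moreover have "S \<union> (A - S) = A" "f ` S \<union> (B - f ` S) = B" using assms(5,6) by auto
  ultimately have "bij_betw g A B" by simp
  then show ?thesis using that g_def by simp
qed

lemma assignment_extending:
  assumes "finite H" "card H = n" "inj_on f S" "S \<subseteq> agents n" "f ` S \<subseteq> H"
  shows "\<exists>\<mu>\<in>assignments n H. \<forall>s\<in>S. \<mu> s = f s"
proof -
  obtain g where g: "bij_betw g (agents n) H" "\<And>s. s \<in> S \<Longrightarrow> g s = f s"
    using inj_on_extend_to_bij_betw[of "agents n" H f S] assms by auto
  define \<mu> where "\<mu> a = (if a \<in> agents n then g a else undefined)" for a
  have "bij_betw \<mu> (agents n) H"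
    using g(1) by (rule bij_betw_cong[THEN iffD1, rotated]) (simp add: \<mu>_def)
  then have "\<mu> \<in> assignments n H" unfolding assignments_def by (simp add: \<mu>_def)
  moreover have "\<forall>s\<in>S. \<mu> s = f s" using g(2) assms(4) by (auto simp: \<mu>_def)
  ultimately show ?thesis by blast
qed

lemma assignment_comp_permutes:
  assumes "\<mu> \<in> assignments n H" "\<sigma> permutes agents n"
  shows "\<mu> \<circ> \<sigma> \<in> assignments n H"
proof -
  have "bij_betw (\<mu> \<circ> \<sigma>) (agents n) H"
    using permutes_imp_bij[OF assms(2)] assms(1) unfolding assignments_def by (blast intro: bij_betw_trans)
  moreover have "\<sigma> x = x" if "x \<notin> agents n" for x
    using assms(2) that unfolding permutes_def by blast
  ultimately show ?thesis using assms(1) unfolding assignments_def by simp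
qed

lemma majority_pref_local:
  assumes "K \<subseteq> agents n" "\<And>x. x \<in> agents n - K \<Longrightarrow> \<mu> x = \<nu> x"
  shows "majority_pref n R \<mu> \<nu> \<longleftrightarrow>
    (\<Sum>x\<in>K. of_bool (weakly_prefers R x \<nu> \<mu>) :: nat)
      \<le> (\<Sum>x\<in>K. of_bool (weakly_prefers R x \<mu> \<nu>))"
proof -
  have split: "card (supporters n R \<alpha> \<beta>) =
      (\<Sum>x\<in>K. of_bool (weakly_prefers R x \<alpha> \<beta>)) + card (agents n - K)"
    if "\<And>x. x \<in> agents n - K \<Longrightarrow> \<alpha> x = \<beta> x" for \<alpha> \<beta>
  proof -
    have "card (supporters n R \<alpha> \<beta>) = (\<Sum>x\<in>agents n. of_bool (weakly_prefers R x \<alpha> \<beta>))"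
      by (simp add: supporters_def Int_def)
    also have "\<dots> = (\<Sum>x\<in>K. of_bool (weakly_prefers R x \<alpha> \<beta>))
        + (\<Sum>x\<in>agents n - K. of_bool (weakly_prefers R x \<alpha> \<beta>))"
      using sum.subset_diff[OF assms(1) finite_agents] by (simp only: add.commute)
    also have "(\<Sum>x\<in>agents n - K. of_bool (weakly_prefers R x \<alpha> \<beta>)) = card (agents n - K)"
      using that by (simp add: weakly_prefers_def)
    finally show ?thesis .
  qed
  show ?thesis
    unfolding majority_pref_def using split[of \<mu> \<nu>] split[of \<nu> \<mu>] assms(2) by (simp add: eq_commute)
qed

lemma majority_pref_transpose:
  assumes R: "is_profile n H R" and x: "x \<in> agents n" and y: "y \<in> agents n" "x \<noteq> y"
    and pq: "p \<in> H" "q \<in> H" "p \<noteq> q" and \<mu>: "\<mu> x = p" "\<mu> y = q"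
  shows "majority_pref n R \<mu> (\<mu> \<circ> transpose x y) \<longleftrightarrow> ((p, q) \<in> R y \<longrightarrow> (p, q) \<in> R x)"
proof -
  have "majority_pref n R \<mu> (\<mu> \<circ> transpose x y) \<longleftrightarrow>
      of_bool ((q, p) \<in> R x) + of_bool ((p, q) \<in> R y)
      \<le> (of_bool ((p, q) \<in> R x) + of_bool ((q, p) \<in> R y) :: nat)"
    using x y pq \<mu> by (subst majority_pref_local[of "{x, y}"]) (auto simp: weakly_prefers_def)
  then show ?thesis
    using profile_converse_iff[OF R x pq] profile_converse_iff[OF R y(1) pq] by auto
qed

lemma majority_pref_cycle:
  assumes R: "is_profile n H R"
    and xyz: "x \<in> agents n" "y \<in> agents n" "z \<in> agents n" "x \<noteq> y" "x \<noteq> z" "y \<noteq> z"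
    and pqr: "p \<in> H" "q \<in> H" "r \<in> H" "p \<noteq> q" "p \<noteq> r" "q \<noteq> r"
    and \<mu>: "\<mu> x = p" "\<mu> y = q" "\<mu> z = r"
  shows "majority_pref n R \<mu> (\<mu> \<circ> transpose x y \<circ> transpose y z) \<longleftrightarrow>
    (p, q) \<in> R x \<and> (q, r) \<in> R y \<or> (p, q) \<in> R x \<and> (r, p) \<in> R z \<or> (q, r) \<in> R y \<and> (r, p) \<in> R z"
proof -
  \<comment> \<open>The second assignment gives x, y, z the houses q, r, p.\<close>
  have "majority_pref n R \<mu> (\<mu> \<circ> transpose x y \<circ> transpose y z) \<longleftrightarrow>
      of_bool ((q, p) \<in> R x) + of_bool ((r, q) \<in> R y) + of_bool ((p, r) \<in> R z)
      \<le> (of_bool ((p, q) \<in> R x) + of_bool ((q, r) \<in> R y) + of_bool ((r, p) \<in> R z) :: nat)"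
    using xyz pqr \<mu> by (subst majority_pref_local[of "{x, y, z}"]) (auto simp: weakly_prefers_def)
  then show ?thesis
    using profile_converse_iff[OF R xyz(1) pqr(1,2,4)] profile_converse_iff[OF R xyz(2) pqr(2,3,6)]
      profile_converse_iff[OF R xyz(3) pqr(3,1) pqr(5)[symmetric]] by auto
qed

definition ranked_above :: "nat \<Rightarrow> (nat \<Rightarrow> ('h \<times> 'h) set) \<Rightarrow> 'h set \<Rightarrow> 'h set \<Rightarrow> bool" where
  "ranked_above n R A B \<longleftrightarrow> (\<forall>x\<in>agents n. \<forall>p\<in>A. \<forall>q\<in>B. (p, q) \<in> R x)"

definition moves_top_to_bottom ::
  "nat \<Rightarrow> 'h set \<Rightarrow> (nat \<Rightarrow> ('h \<times> 'h) set) \<Rightarrow> (nat \<Rightarrow> ('h \<times> 'h) set) \<Rightarrow> 'h set \<Rightarrow> bool" where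
  "moves_top_to_bottom n H P P' A \<longleftrightarrow>
     A \<subseteq> H \<and> ranked_above n P A (H - A) \<and> ranked_above n P' (H - A) A \<and>
     (\<forall>x\<in>agents n. \<forall>p\<in>H. \<forall>q\<in>H.
        (p \<in> A \<longleftrightarrow> q \<in> A) \<longrightarrow> ((p, q) \<in> P' x \<longleftrightarrow> (p, q) \<in> P x))"

lemma card_bij_betw_preimage:
  assumes "bij_betw f N H" "A \<subseteq> H"
  shows "card {x \<in> N. f x \<in> A} = card A"
proof (rule bij_betw_same_card, rule bij_betw_subset[OF assms(1)])
  show "f ` {x \<in> N. f x \<in> A} = A" using assms unfolding bij_betw_def by auto
qed auto

lemma card_leaving_eq_card_entering:
  assumes "finite N" "bij_betw f N H" "bij_betw g N H" "A \<subseteq> H"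
  shows "card {x \<in> N. f x \<in> A \<and> g x \<notin> A} = card {x \<in> N. f x \<notin> A \<and> g x \<in> A}"
proof -
  let ?Both = "{x \<in> N. f x \<in> A \<and> g x \<in> A}"
  have "{x \<in> N. f x \<in> A} = {x \<in> N. f x \<in> A \<and> g x \<notin> A} \<union> ?Both"
    "{x \<in> N. g x \<in> A} = {x \<in> N. f x \<notin> A \<and> g x \<in> A} \<union> ?Both"
    by auto
  then have "card {x \<in> N. f x \<in> A \<and> g x \<notin> A} + card ?Both =
      card {x \<in> N. f x \<notin> A \<and> g x \<in> A} + card ?Both"
    using card_bij_betw_preimage[OF assms(2,4)] card_bij_betw_preimage[OF assms(3,4)] assms(1)
    by (simp add: card_Un_disjoint disjoint_iff)
  then show ?thesis by simp
qed

lemma weakly_prefers_if_moves_top_to_bottom: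
  assumes P: "is_profile n H P" and P': "is_profile n H P'" and A: "moves_top_to_bottom n H P P' A"
    and x: "x \<in> agents n" and H: "\<mu> x \<in> H" "\<nu> x \<in> H"
  shows "\<mu> x \<in> A \<longleftrightarrow> \<nu> x \<in> A \<Longrightarrow> weakly_prefers P' x \<mu> \<nu> \<longleftrightarrow> weakly_prefers P x \<mu> \<nu>"
    and "\<mu> x \<in> A \<Longrightarrow> \<nu> x \<notin> A \<Longrightarrow> weakly_prefers P x \<mu> \<nu> \<and> \<not> weakly_prefers P' x \<mu> \<nu>"
    and "\<mu> x \<notin> A \<Longrightarrow> \<nu> x \<in> A \<Longrightarrow> \<not> weakly_prefers P x \<mu> \<nu> \<and> weakly_prefers P' x \<mu> \<nu>"
proof -
  have across: "(p, q) \<in> P x" "(q, p) \<in> P' x" if "p \<in> A" "q \<in> H - A" for p q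
    using A x that unfolding moves_top_to_bottom_def ranked_above_def by blast+
  show "\<mu> x \<in> A \<longleftrightarrow> \<nu> x \<in> A \<Longrightarrow> weakly_prefers P' x \<mu> \<nu> \<longleftrightarrow> weakly_prefers P x \<mu> \<nu>"
    using A x H unfolding moves_top_to_bottom_def weakly_prefers_def by auto
  show "\<mu> x \<in> A \<Longrightarrow> \<nu> x \<notin> A \<Longrightarrow> weakly_prefers P x \<mu> \<nu> \<and> \<not> weakly_prefers P' x \<mu> \<nu>"
    using across[of "\<mu> x" "\<nu> x"] H profile_asym[OF P' x] unfolding weakly_prefers_def by auto
  show "\<mu> x \<notin> A \<Longrightarrow> \<nu> x \<in> A \<Longrightarrow> \<not> weakly_prefers P x \<mu> \<nu> \<and> weakly_prefers P' x \<mu> \<nu>"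
    using across[of "\<nu> x" "\<mu> x"] H profile_asym[OF P x] unfolding weakly_prefers_def by auto
qed

lemma supporters_card_eq_if_moves_top_to_bottom:
  assumes P: "is_profile n H P" and P': "is_profile n H P'" and A: "moves_top_to_bottom n H P P' A"
    and \<mu>: "\<mu> \<in> assignments n H" and \<nu>: "\<nu> \<in> assignments n H"
  shows "card (supporters n P \<mu> \<nu>) = card (supporters n P' \<mu> \<nu>)"
proof -
  let ?N = "agents n"
  define Same where "Same = {x \<in> ?N. (\<mu> x \<in> A \<longleftrightarrow> \<nu> x \<in> A) \<and> weakly_prefers P x \<mu> \<nu>}"
  define Leaving where "Leaving = {x \<in> ?N. \<mu> x \<in> A \<and> \<nu> x \<notin> A}"
  define Entering where "Entering = {x \<in> ?N. \<mu> x \<notin> A \<and> \<nu> x \<in> A}"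
  have bij: "bij_betw \<mu> ?N H" "bij_betw \<nu> ?N H" using \<mu> \<nu> unfolding assignments_def by auto
  then have H: "\<mu> x \<in> H" "\<nu> x \<in> H" if "x \<in> ?N" for x
    using that by (auto dest: bij_betw_apply)
  have "(x \<in> supporters n P \<mu> \<nu> \<longleftrightarrow> x \<in> Same \<union> Leaving) \<and>
      (x \<in> supporters n P' \<mu> \<nu> \<longleftrightarrow> x \<in> Same \<union> Entering)" for x
  proof (cases "x \<in> ?N")
    case True
    from weakly_prefers_if_moves_top_to_bottom[where \<mu> = \<mu> and \<nu> = \<nu>, OF P P' A True H[OF True]]
    show ?thesis
      unfolding supporters_def Same_def Leaving_def Entering_def by blast
  qed (simp add: supporters_def Same_def Leaving_def Entering_def)
  then have "supporters n P \<mu> \<nu> = Same \<union> Leaving" "supporters n P' \<mu> \<nu> = Same \<union> Entering"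
    by blast+
  moreover have "Same \<inter> Leaving = {}" "Same \<inter> Entering = {}"
    unfolding Same_def Leaving_def Entering_def by auto
  moreover have "card Leaving = card Entering"
    using A card_leaving_eq_card_entering[OF finite_agents bij]
    unfolding Leaving_def Entering_def moves_top_to_bottom_def by blast
  ultimately show ?thesis by (simp add: card_Un_disjoint Same_def Leaving_def Entering_def)
qed

lemma majority_graph_eq_if_moves_top_to_bottom:
  assumes "is_profile n H P" "is_profile n H P'" "moves_top_to_bottom n H P P' A"
  shows "majority_graph n H P = majority_graph n H P'"
  using supporters_card_eq_if_moves_top_to_bottom[OF assms]
  unfolding majority_graph_def majority_pref_def by auto

lemma decomposition_iff_sorted_wrt:
  "decomposition n H R Hs \<longleftrightarrow>
     (\<forall>j < length Hs. Hs ! j \<noteq> {}) \<and>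
     (\<forall>i < length Hs. \<forall>j < length Hs. i \<noteq> j \<longrightarrow> Hs ! i \<inter> Hs ! j = {}) \<and>
     \<Union> (set Hs) = H \<and> sorted_wrt (ranked_above n R) Hs"
  unfolding decomposition_def sorted_wrt_iff_nth_less ranked_above_def by blast

lemma decomposition_single: "decomposition n H R [H] \<longleftrightarrow> H \<noteq> {}"
  unfolding decomposition_def by simp

lemma decomposition_pair:
  "decomposition n H R [A, B] \<longleftrightarrow>
     A \<noteq> {} \<and> B \<noteq> {} \<and> A \<inter> B = {} \<and> A \<union> B = H \<and> ranked_above n R A B"
  unfolding decomposition_iff_sorted_wrt by (auto simp: All_less_Suc)

lemma sorted_wrt_same_order_cases:
  "sorted_wrt R xs \<Longrightarrow> sorted_wrt S xs \<Longrightarrow> a \<in> set xs \<Longrightarrow> b \<in> set xs \<Longrightarrow>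
     a = b \<or> R a b \<and> S a b \<or> R b a \<and> S b a"
  by (induction xs) auto

lemma agree_on_Union_if_sorted_wrt_ranked_above:
  assumes P: "is_profile n H P" and P': "is_profile n H P'"
    and sorted: "sorted_wrt (ranked_above n P) Bs" "sorted_wrt (ranked_above n P') Bs"
    and blocks: "\<And>B x p q. B \<in> set Bs \<Longrightarrow> x \<in> agents n \<Longrightarrow> p \<in> B \<Longrightarrow> q \<in> B \<Longrightarrow>
      (p, q) \<in> P' x \<longleftrightarrow> (p, q) \<in> P x"
    and pq: "p \<in> \<Union> (set Bs)" "q \<in> \<Union> (set Bs)" and x: "x \<in> agents n"
  shows "(p, q) \<in> P' x \<longleftrightarrow> (p, q) \<in> P x"
proof -
  obtain B C where B: "B \<in> set Bs" "p \<in> B" and C: "C \<in> set Bs" "q \<in> C" using pq by blast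
  from sorted_wrt_same_order_cases[OF sorted B(1) C(1)] show ?thesis
  proof (elim disjE conjE)
    assume "B = C"
    then show ?thesis using blocks B C x by simp
  next
    assume "ranked_above n P B C" "ranked_above n P' B C"
    then show ?thesis using B C x unfolding ranked_above_def by blast
  next
    assume "ranked_above n P C B" "ranked_above n P' C B"
    then show ?thesis
      using B C x profile_asym[OF P x] profile_asym[OF P' x] unfolding ranked_above_def by blast
  qed
qed

lemma moves_top_to_bottom_if_sorted_wrt_swapped:
  assumes P: "is_profile n H P" and P': "is_profile n H P'"
    and sorted: "sorted_wrt (ranked_above n P) (Ls @ Rs)" "sorted_wrt (ranked_above n P') (Rs @ Ls)"
    and blocks: "\<And>B x p q. B \<in> set (Ls @ Rs) \<Longrightarrow> x \<in> agents n \<Longrightarrow> p \<in> B \<Longrightarrow> q \<in> B \<Longrightarrow>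
      (p, q) \<in> P' x \<longleftrightarrow> (p, q) \<in> P x"
    and H: "H = \<Union> (set (Ls @ Rs))"
  shows "moves_top_to_bottom n H P P' (\<Union> (set Ls))"
  unfolding moves_top_to_bottom_def
proof (intro conjI ballI impI)
  let ?A = "\<Union> (set Ls)"
  have Ls: "sorted_wrt (ranked_above n P) Ls" "sorted_wrt (ranked_above n P') Ls"
    and Rs: "sorted_wrt (ranked_above n P) Rs" "sorted_wrt (ranked_above n P') Rs"
    and cross: "\<forall>B\<in>set Ls. \<forall>C\<in>set Rs. ranked_above n P B C \<and> ranked_above n P' C B"
    using sorted by (simp_all add: sorted_wrt_append)
  show "?A \<subseteq> H" using H by auto
  show "ranked_above n P ?A (H - ?A)" "ranked_above n P' (H - ?A) ?A"
    using cross H unfolding ranked_above_def by auto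
  show "(p, q) \<in> P' x \<longleftrightarrow> (p, q) \<in> P x"
    if "x \<in> agents n" "p \<in> H" "q \<in> H" "p \<in> ?A \<longleftrightarrow> q \<in> ?A" for x p q
  proof (cases "p \<in> ?A")
    case True
    with that show ?thesis
      by (intro agree_on_Union_if_sorted_wrt_ranked_above[OF P P' Ls blocks]) auto
  next
    case False
    with that H show ?thesis
      by (intro agree_on_Union_if_sorted_wrt_ranked_above[OF P P' Rs blocks]) auto
  qed
qed

lemma rotation_equivalent_imp_moves_top_to_bottom:
  assumes P: "is_profile n H P" and P': "is_profile n H P'" and rot: "rotation_equivalent n H P P'"
  obtains A where "moves_top_to_bottom n H P P' A"
proof -
  obtain Hs r where dec_P: "decomposition n H P Hs"
    and blocks: "\<forall>j < length Hs. \<forall>p \<in> Hs ! j. \<forall>q \<in> Hs ! j. \<forall>x \<in> agents n.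
      (p, q) \<in> P x \<longleftrightarrow> (p, q) \<in> P' x"
    and r: "r < length Hs" and dec_P': "decomposition n H P' (rotate r Hs)"
    using rot unfolding rotation_equivalent_def by blast
  have "sorted_wrt (ranked_above n P) (take r Hs @ drop r Hs)" "H = \<Union> (set (take r Hs @ drop r Hs))"
    using dec_P by (simp_all add: decomposition_iff_sorted_wrt)
  moreover have "sorted_wrt (ranked_above n P') (drop r Hs @ take r Hs)"
    using dec_P' r unfolding decomposition_iff_sorted_wrt by (simp add: rotate_drop_take)
  moreover have "(p, q) \<in> P' x \<longleftrightarrow> (p, q) \<in> P x"
    if "B \<in> set (take r Hs @ drop r Hs)" "x \<in> agents n" "p \<in> B" "q \<in> B" for B x p q
    using that blocks by (metis append_take_drop_id in_set_conv_nth)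
  ultimately have "moves_top_to_bottom n H P P' (\<Union> (set (take r Hs)))"
    by (intro moves_top_to_bottom_if_sorted_wrt_swapped[OF P P'])
  then show ?thesis by (rule that)
qed

lemma moves_top_to_bottom_imp_rotation_equivalent:
  assumes "H \<noteq> {}" and A: "moves_top_to_bottom n H P P' A"
  shows "rotation_equivalent n H P P'"
proof (cases "A = {} \<or> A = H")
  case True
  then have "(p, q) \<in> P x \<longleftrightarrow> (p, q) \<in> P' x" if "x \<in> agents n" "p \<in> H" "q \<in> H" for x p q
    using A that unfolding moves_top_to_bottom_def by blast
  then show ?thesis
    unfolding rotation_equivalent_def
    by (intro exI[of _ "[H]"]) (simp add: decomposition_single \<open>H \<noteq> {}\<close>)
next
  case False
  have "decomposition n H P [A, H - A]" "decomposition n H P' (rotate 1 [A, H - A])"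
    using A False unfolding moves_top_to_bottom_def by (auto simp: decomposition_pair)
  moreover have "(p, q) \<in> P x \<longleftrightarrow> (p, q) \<in> P' x"
    if "B \<in> {A, H - A}" "x \<in> agents n" "p \<in> B" "q \<in> B" for B x p q
    using A that unfolding moves_top_to_bottom_def by blast
  ultimately show ?thesis
    unfolding rotation_equivalent_def
    by (intro exI[of _ "[A, H - A]"]) (auto simp: All_less_Suc)
qed

locale same_majority_graph =
  fixes n :: nat and H :: "'h set" and P P' :: "nat \<Rightarrow> ('h \<times> 'h) set"
  assumes finite_H: "finite H" and card_H: "card H = n"
    and P: "is_profile n H P" and P': "is_profile n H P'"
    and same_graph: "majority_graph n H P = majority_graph n H P'"
begin

lemma majority_pref_iff:
  "\<mu> \<in> assignments n H \<Longrightarrow> \<nu> \<in> assignments n H \<Longrightarrow> majority_pref n P \<mu> \<nu> \<longleftrightarrow> majority_pref n P' \<mu> \<nu>"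
  using same_graph unfolding majority_graph_def by (auto simp: set_eq_iff)

lemma transpose_test_iff:
  assumes x: "x \<in> agents n" and y: "y \<in> agents n" "x \<noteq> y" and pq: "p \<in> H" "q \<in> H" "p \<noteq> q"
  shows "((p, q) \<in> P y \<longrightarrow> (p, q) \<in> P x) \<longleftrightarrow> ((p, q) \<in> P' y \<longrightarrow> (p, q) \<in> P' x)"
proof -
  have "\<exists>\<mu>\<in>assignments n H. \<forall>s\<in>{x, y}. \<mu> s = (if s = x then p else q)"
    using x y pq by (intro assignment_extending[OF finite_H card_H]) (auto simp: inj_on_def)
  then obtain \<mu> where \<mu>: "\<mu> \<in> assignments n H" "\<mu> x = p" "\<mu> y = q" using y by auto
  have "\<mu> \<circ> transpose x y \<in> assignments n H"
    using \<mu>(1) x y by (intro assignment_comp_permutes permutes_swap_id)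
  then show ?thesis
    using majority_pref_iff[OF \<mu>(1)] majority_pref_transpose[OF P x y pq \<mu>(2,3)]
      majority_pref_transpose[OF P' x y pq \<mu>(2,3)] by simp
qed

lemma cycle_test_iff:
  assumes xyz: "x \<in> agents n" "y \<in> agents n" "z \<in> agents n" "x \<noteq> y" "x \<noteq> z" "y \<noteq> z"
    and pqr: "p \<in> H" "q \<in> H" "r \<in> H" "p \<noteq> q" "p \<noteq> r" "q \<noteq> r"
  shows "(p, q) \<in> P x \<and> (q, r) \<in> P y \<or> (p, q) \<in> P x \<and> (r, p) \<in> P z \<or>
      (q, r) \<in> P y \<and> (r, p) \<in> P z
    \<longleftrightarrow> (p, q) \<in> P' x \<and> (q, r) \<in> P' y \<or> (p, q) \<in> P' x \<and> (r, p) \<in> P' z \<or>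
      (q, r) \<in> P' y \<and> (r, p) \<in> P' z"
proof -
  have "\<exists>\<mu>\<in>assignments n H. \<forall>s\<in>{x, y, z}. \<mu> s = (if s = x then p else if s = y then q else r)"
    using xyz pqr by (intro assignment_extending[OF finite_H card_H]) (auto simp: inj_on_def)
  then obtain \<mu> where \<mu>: "\<mu> \<in> assignments n H" "\<mu> x = p" "\<mu> y = q" "\<mu> z = r"
    using xyz by auto
  have "\<mu> \<circ> transpose x y \<circ> transpose y z \<in> assignments n H"
    using \<mu>(1) xyz unfolding comp_assoc by (intro assignment_comp_permutes permutes_compose permutes_swap_id)
  then show ?thesis
    using majority_pref_iff[OF \<mu>(1)] majority_pref_cycle[OF P xyz pqr \<mu>(2-4)]
      majority_pref_cycle[OF P' xyz pqr \<mu>(2-4)] by simp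
qed

definition reversed :: "('h \<times> 'h) set" where
  "reversed = {(p, q). \<exists>x\<in>agents n. (p, q) \<in> P x \<and> (q, p) \<in> P' x}"

lemma reversedE:
  assumes "(p, q) \<in> reversed"
  obtains x where "x \<in> agents n" "(p, q) \<in> P x" "(q, p) \<in> P' x" "p \<in> H" "q \<in> H" "p \<noteq> q"
  using assms profile_in_carrier[OF P] profile_irrefl[OF P] unfolding reversed_def by blast

lemma reversed_unanimous:
  assumes pq: "(p, q) \<in> reversed" and y: "y \<in> agents n"
  shows "(p, q) \<in> P y" "(q, p) \<in> P' y"
proof -
  obtain x where x: "x \<in> agents n" "(p, q) \<in> P x" "(q, p) \<in> P' x" and H: "p \<in> H" "q \<in> H" "p \<noteq> q"
    using pq by (rule reversedE)
  have "(p, q) \<notin> P' x" using profile_asym[OF P' x(1,3)] .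
  then have "(p, q) \<in> P y \<and> (p, q) \<notin> P' y"
    using x transpose_test_iff[OF y x(1) _ H] transpose_test_iff[OF x(1) y _ H] by (cases "x = y") auto
  then show "(p, q) \<in> P y" "(q, p) \<in> P' y" using profile_converse_iff[OF P' y H] by auto
qed

lemma agree_if_not_reversed:
  assumes "p \<in> H" "q \<in> H" "(p, q) \<notin> reversed" "(q, p) \<notin> reversed" "x \<in> agents n"
  shows "(p, q) \<in> P' x \<longleftrightarrow> (p, q) \<in> P x"
proof (cases "p = q")
  case True
  then show ?thesis using profile_irrefl[OF P assms(5)] profile_irrefl[OF P' assms(5)] by simp
next
  case False
  then show ?thesis
    using assms profile_converse_iff[OF P assms(5,1,2) False] profile_converse_iff[OF P' assms(5,1,2) False]
    unfolding reversed_def by blast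
qed

lemma three_agents_if_three_houses:
  assumes "p \<in> H" "q \<in> H" "r \<in> H" "p \<noteq> q" "p \<noteq> r" "q \<noteq> r"
  shows "1 \<in> agents n" "2 \<in> agents n" "3 \<in> agents n"
proof -
  have "card {p, q, r} \<le> card H" using assms finite_H by (intro card_mono) auto
  then have "3 \<le> n" using assms card_H by simp
  then show "1 \<in> agents n" "2 \<in> agents n" "3 \<in> agents n" unfolding agents_def by auto
qed

lemma reversed_not_chained:
  assumes pq: "(p, q) \<in> reversed" and qr: "(q, r) \<in> reversed"
  shows False
proof -
  obtain x where x: "x \<in> agents n" and H: "p \<in> H" "q \<in> H" "p \<noteq> q"
    using pq by (rule reversedE)
  obtain r_H: "r \<in> H" "q \<noteq> r" using qr by (rule reversedE)
  have "p \<noteq> r"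
    using reversed_unanimous[OF pq x] reversed_unanimous[OF qr x] profile_asym[OF P x] by blast
  then have agents: "1 \<in> agents n" "2 \<in> agents n" "3 \<in> agents n"
    using three_agents_if_three_houses H r_H by blast+
  have "(p, q) \<in> P 1" "(q, r) \<in> P 2" "(p, q) \<notin> P' 1" "(q, r) \<notin> P' 2"
    using reversed_unanimous[OF pq] reversed_unanimous[OF qr] agents profile_asym[OF P'] by blast+
  then show False
    using cycle_test_iff[OF agents _ _ _ H(1,2) r_H(1) H(3) \<open>p \<noteq> r\<close> r_H(2)] by simp
qed

lemma top_or_bottom_if_not_reversed:
  assumes pq: "(p, q) \<in> reversed" and r: "r \<in> H" "r \<noteq> p" "r \<noteq> q"
    and not_reversed: "(p, r) \<notin> reversed" "(r, q) \<notin> reversed" and x: "x \<in> agents n"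
  shows "(r, p) \<in> P x \<or> (q, r) \<in> P x"
proof (rule ccontr)
  obtain H: "p \<in> H" "q \<in> H" using pq by (rule reversedE)
  have "(r, p) \<notin> reversed" "(q, r) \<notin> reversed" using pq reversed_not_chained by blast+
  then have agree: "(r, p) \<in> P' x \<longleftrightarrow> (r, p) \<in> P x" "(q, r) \<in> P' x \<longleftrightarrow> (q, r) \<in> P x"
    using agree_if_not_reversed H r x not_reversed by blast+
  assume "\<not> ((r, p) \<in> P x \<or> (q, r) \<in> P x)"
  then have "(p, r) \<in> P' x" "(r, q) \<in> P' x"
    using agree profile_converse_iff[OF P x] profile_converse_iff[OF P' x] H r by metis+
  then have "(p, q) \<in> P' x" by (rule profile_trans[OF P' x])
  then show False using reversed_unanimous(2)[OF pq x] profile_asym[OF P' x] by blast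
qed

lemma reversed_split:
  assumes pq: "(p, q) \<in> reversed" and r: "r \<in> H" "r \<noteq> p" "r \<noteq> q"
  shows "(p, r) \<in> reversed \<or> (r, q) \<in> reversed"
proof (rule ccontr)
  assume not_split: "\<not> ((p, r) \<in> reversed \<or> (r, q) \<in> reversed)"
  then have top_or_bottom: "(r, p) \<in> P x \<or> (q, r) \<in> P x" if "x \<in> agents n" for x
    using top_or_bottom_if_not_reversed[OF pq r _ _ that] by blast
  obtain H: "p \<in> H" "q \<in> H" "p \<noteq> q" using pq by (rule reversedE)
  have unanimous: "(p, q) \<in> P x" "(p, q) \<notin> P' x" if "x \<in> agents n" for x
    using reversed_unanimous[OF pq that] profile_asym[OF P' that] by blast+
  have agree: "(r, p) \<in> P' x \<longleftrightarrow> (r, p) \<in> P x" "(q, r) \<in> P' x \<longleftrightarrow> (q, r) \<in> P x"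
    if "x \<in> agents n" for x
    using agree_if_not_reversed[OF _ _ _ _ that] reversed_not_chained pq not_split H r by blast+
  \<comment> \<open>Of three agents, two place r on the same side of p and q; together with the third
    agent they make the cycle test fail.\<close>
  have no_same_side: False
    if xyz: "x \<in> agents n" "y \<in> agents n" "z \<in> agents n" "x \<noteq> y" "x \<noteq> z" "y \<noteq> z"
    and same_side: "(r, p) \<in> P y \<longleftrightarrow> (r, p) \<in> P z" for x y z
  proof (cases "(r, p) \<in> P y")
    case True
    then have "(r, q) \<in> P y" using unanimous(1)[OF xyz(2)] profile_trans[OF P xyz(2)] by blast
    then have "(q, r) \<notin> P y" using profile_asym[OF P xyz(2)] by blast
    then show False
      using cycle_test_iff[OF xyz H(1,2) r(1) H(3) r(2,3)[symmetric]] True same_side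
        unanimous[OF xyz(1)] agree[OF xyz(2)] by blast
  next
    case False
    then show False
      using cycle_test_iff[OF xyz H(1,2) r(1) H(3) r(2,3)[symmetric]] same_side top_or_bottom[OF xyz(2)]
        unanimous[OF xyz(1)] agree[OF xyz(3)] by blast
  qed
  have "1 \<in> agents n" "2 \<in> agents n" "3 \<in> agents n"
    using three_agents_if_three_houses[OF H(1,2) r(1) H(3) r(2,3)[symmetric]] by simp_all
  then show False
    using no_same_side[of 1 2 3] no_same_side[of 2 1 3] no_same_side[of 3 1 2] by auto
qed

lemma moves_top_to_bottom_Domain_reversed: "moves_top_to_bottom n H P P' (Domain reversed)"
proof -
  let ?A = "Domain reversed"
  have A_H: "?A \<subseteq> H" by (blast elim: reversedE)
  have across: "(p, q) \<in> reversed" if p: "p \<in> ?A" and q: "q \<in> H - ?A" for p q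
  proof -
    obtain q' where q': "(p, q') \<in> reversed" using p by blast
    show ?thesis
    proof (cases "q = q'")
      case False
      moreover have "q \<noteq> p" using p q by blast
      ultimately show ?thesis using reversed_split[OF q'] q by blast
    qed (use q' in simp)
  qed
  have not_reversed: "(p, q) \<notin> reversed" if "p \<in> H" "q \<in> H" "p \<in> ?A \<longleftrightarrow> q \<in> ?A" for p q
    using that reversed_not_chained by blast
  show ?thesis
    unfolding moves_top_to_bottom_def ranked_above_def
  proof (intro conjI ballI impI)
    show "?A \<subseteq> H" by (fact A_H)
    show "(p, q) \<in> P x" if "x \<in> agents n" "p \<in> ?A" "q \<in> H - ?A" for x p q
      using reversed_unanimous(1)[OF across that(1)] that by blast
    show "(q, p) \<in> P' x" if "x \<in> agents n" "q \<in> H - ?A" "p \<in> ?A" for x p q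
      using reversed_unanimous(2)[OF across that(1)] that by blast
    show "(p, q) \<in> P' x \<longleftrightarrow> (p, q) \<in> P x"
      if "x \<in> agents n" "p \<in> H" "q \<in> H" "p \<in> ?A \<longleftrightarrow> q \<in> ?A" for x p q
      using agree_if_not_reversed not_reversed that by metis
  qed
qed

end

theorem theorem3p1:
  fixes n :: nat and H :: "'h set" and P P' :: "nat \<Rightarrow> ('h \<times> 'h) set"
  assumes "n \<ge> 1" and "finite H" and "card H = n"
    and "is_profile n H P" and "is_profile n H P'"
  shows "majority_graph n H P = majority_graph n H P' \<longleftrightarrow> rotation_equivalent n H P P'"
proof
  assume "majority_graph n H P = majority_graph n H P'"
  then interpret same_majority_graph n H P P'
    using assms by unfold_locales
  have "H \<noteq> {}" using assms by auto
  then show "rotation_equivalent n H P P'"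
    using moves_top_to_bottom_Domain_reversed by (rule moves_top_to_bottom_imp_rotation_equivalent)
next
  assume "rotation_equivalent n H P P'"
  then obtain A where "moves_top_to_bottom n H P P' A"
    using rotation_equivalent_imp_moves_top_to_bottom[OF assms(4,5)] by blast
  then show "majority_graph n H P = majority_graph n H P'"
    using majority_graph_eq_if_moves_top_to_bottom[OF assms(4,5)] by blast
qed

end
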